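(* Let $(\mathcal{H},\langle\cdot,\cdot\rangle)$ be an infinite-dimensional separable Hilbert space, and let $\mathsf{H}$ be a quasi-self-adjoint operator in $\mathcal{H}$ with purely real, simple, discrete spectrum, whose eigenfunctions $\{\psi_n\}_{n=1}^\infty$ form a basis of $\mathcal{H}$ that is quadratically close to some orthonormal basis $\{\chi_n\}_{n=1}^\infty$, i.e. $\sum_{n=1}^\infty\|\psi_n-\chi_n\|^2<\infty$. Let $\{\phi_n\}_{n=1}^\infty$ be the eigenfunctions of $\mathsf{H}^*$, normalised so that $\langle\psi_m,\phi_n\rangle=\delta_{nm}$ and $\|\phi_n\|=1$ for all $n,m$. Let $\Theta$ be a metric operator for $\mathsf{H}$ of the form $$\Theta=\sum_{n=1}^\infty C_n\langle\phi_n,\cdot\rangle\phi_n \quad(\text{strong limit}),$$ where $C_-\le C_n\le C_+$ for all $n$ with some constants $0<C_-\le C_+<\infty$. Then $\mathsf{I}-\Theta$ is a Hilbert–Schmidt operator if and only if $C_n=1+\alpha_n$ for a sequence $\alpha=\{\alpha_n\}_{n=1}^\infty\in\ell^2(\mathbb{N})$.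
   Context: The inner product is linear in the second entry. An operator $\mathsf{H}$ in $\mathcal{H}$ is quasi-self-adjoint if it is densely defined and there is a bounded, non-negative self-adjoint operator $\Theta:\mathcal{H}\to\mathcal{H}$ with bounded inverse such that $\mathsf{H}^*=\Theta\mathsf{H}\Theta^{-1}$; any such $\Theta$ is called a metric (operator) for $\mathsf{H}$. A sequence $\{\psi_n\}$ is a basis if every vector has a unique norm-convergent expansion $\sum c_n\psi_n$. Simple spectrum means every eigenvalue has geometric and algebraic multiplicity one; discrete spectrum means compact resolvent. *)

theory Defs
  imports "HOL-Analysis.Analysis"
begin

text \<open>Concrete model of an infinite-dimensional separable complex Hilbert space:
  the sequence space l^2(N) of square-summable complex sequences.
  Vectors are functions nat => complex; only those in the carrier l2 matter.\<close>

type_synonym vec = "nat \<Rightarrow> complex"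

definition l2 :: "vec set" where
  "l2 = {f. summable (\<lambda>n. (cmod (f n))\<^sup>2)}"

definition ip :: "vec \<Rightarrow> vec \<Rightarrow> complex" where
  "ip f g = (\<Sum>n. cnj (f n) * g n)"

definition nrm :: "vec \<Rightarrow> real" where
  "nrm f = sqrt (\<Sum>n. (cmod (f n))\<^sup>2)"

definition vdiff :: "vec \<Rightarrow> vec \<Rightarrow> vec" where
  "vdiff f g = (\<lambda>n. f n - g n)"

definition vscale :: "complex \<Rightarrow> vec \<Rightarrow> vec" where
  "vscale c f = (\<lambda>n. c * f n)"

definition l2_tendsto :: "(nat \<Rightarrow> vec) \<Rightarrow> vec \<Rightarrow> bool" where
  "l2_tendsto s x \<longleftrightarrow> (\<lambda>k. nrm (vdiff (s k) x)) \<longlonglongrightarrow> 0"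

definition is_basis :: "(nat \<Rightarrow> vec) \<Rightarrow> bool" where
  "is_basis \<psi> \<longleftrightarrow> (\<forall>k. \<psi> k \<in> l2) \<and>
     (\<forall>x\<in>l2. \<exists>!c::nat \<Rightarrow> complex. l2_tendsto (\<lambda>N i. \<Sum>k<N. c k * \<psi> k i) x)"

definition orthonormal_basis :: "(nat \<Rightarrow> vec) \<Rightarrow> bool" where
  "orthonormal_basis e \<longleftrightarrow> is_basis e \<and>
     (\<forall>j k. ip (e j) (e k) = (if j = k then 1 else 0))"

definition lin_op :: "vec set \<Rightarrow> (vec \<Rightarrow> vec) \<Rightarrow> bool" where
  "lin_op D T \<longleftrightarrow> D \<subseteq> l2 \<and> (\<lambda>n. 0) \<in> D \<and>
     (\<forall>x\<in>D. \<forall>y\<in>D. \<forall>a b. (\<lambda>n. a * x n + b * y n) \<in> D \<and>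
        T (\<lambda>n. a * x n + b * y n) = (\<lambda>n. a * T x n + b * T y n)) \<and>
     (\<forall>x\<in>D. T x \<in> l2)"

definition densely_defined :: "vec set \<Rightarrow> (vec \<Rightarrow> vec) \<Rightarrow> bool" where
  "densely_defined D T \<longleftrightarrow> lin_op D T \<and>
     (\<forall>x\<in>l2. \<forall>\<epsilon>>0. \<exists>y\<in>D. nrm (vdiff x y) < \<epsilon>)"

definition bounded_op :: "(vec \<Rightarrow> vec) \<Rightarrow> bool" where
  "bounded_op T \<longleftrightarrow> lin_op l2 T \<and> (\<exists>M. \<forall>x\<in>l2. nrm (T x) \<le> M * nrm x)"

definition adj_dom :: "vec set \<Rightarrow> (vec \<Rightarrow> vec) \<Rightarrow> vec set" where
  "adj_dom D T = {y\<in>l2. \<exists>z\<in>l2. \<forall>x\<in>D. ip y (T x) = ip z x}"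

definition adj :: "vec set \<Rightarrow> (vec \<Rightarrow> vec) \<Rightarrow> vec \<Rightarrow> vec" where
  "adj D T y = (THE z. z \<in> l2 \<and> (\<forall>x\<in>D. ip y (T x) = ip z x))"

text \<open>Metric operator: bounded, non-negative, self-adjoint, with bounded inverse,
  and H^* = Theta H Theta^{-1} (equality of operators, including domains).\<close>
definition is_metric :: "vec set \<Rightarrow> (vec \<Rightarrow> vec) \<Rightarrow> (vec \<Rightarrow> vec) \<Rightarrow> bool" where
  "is_metric D H \<Theta> \<longleftrightarrow> bounded_op \<Theta> \<and>
     (\<forall>x\<in>l2. \<forall>y\<in>l2. ip x (\<Theta> y) = ip (\<Theta> x) y) \<and>
     (\<forall>x\<in>l2. Re (ip x (\<Theta> x)) \<ge> 0) \<and>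
     (\<exists>\<Theta>i. bounded_op \<Theta>i \<and> (\<forall>x\<in>l2. \<Theta>i (\<Theta> x) = x \<and> \<Theta> (\<Theta>i x) = x) \<and>
        adj_dom D H = {x\<in>l2. \<Theta>i x \<in> D} \<and>
        (\<forall>x\<in>adj_dom D H. adj D H x = \<Theta> (H (\<Theta>i x))))"

definition quasi_self_adjoint :: "vec set \<Rightarrow> (vec \<Rightarrow> vec) \<Rightarrow> bool" where
  "quasi_self_adjoint D H \<longleftrightarrow> densely_defined D H \<and> (\<exists>\<Theta>. is_metric D H \<Theta>)"

definition is_resolvent :: "vec set \<Rightarrow> (vec \<Rightarrow> vec) \<Rightarrow> complex \<Rightarrow> (vec \<Rightarrow> vec) \<Rightarrow> bool" where
  "is_resolvent D H z R \<longleftrightarrow> bounded_op R \<and>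
     (\<forall>x\<in>l2. R x \<in> D \<and> vdiff (H (R x)) (vscale z (R x)) = x) \<and>
     (\<forall>x\<in>D. R (vdiff (H x) (vscale z x)) = x)"

definition spectrum_op :: "vec set \<Rightarrow> (vec \<Rightarrow> vec) \<Rightarrow> complex set" where
  "spectrum_op D H = {z. \<not> (\<exists>R. is_resolvent D H z R)}"

definition compact_op :: "(vec \<Rightarrow> vec) \<Rightarrow> bool" where
  "compact_op T \<longleftrightarrow> bounded_op T \<and>
     (\<forall>s::nat\<Rightarrow>vec. (\<forall>k. s k \<in> l2) \<and> (\<exists>B::real. \<forall>k. nrm (s k) \<le> B) \<longrightarrow>
        (\<exists>(r::nat\<Rightarrow>nat) y. strict_mono r \<and> y \<in> l2 \<and> l2_tendsto (\<lambda>k. T (s (r k))) y))"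

text \<open>Discrete spectrum = compact resolvent.\<close>
definition discrete_spectrum :: "vec set \<Rightarrow> (vec \<Rightarrow> vec) \<Rightarrow> bool" where
  "discrete_spectrum D H \<longleftrightarrow> (\<exists>z R. is_resolvent D H z R \<and> compact_op R)"

definition real_spectrum :: "vec set \<Rightarrow> (vec \<Rightarrow> vec) \<Rightarrow> bool" where
  "real_spectrum D H \<longleftrightarrow> (\<forall>z\<in>spectrum_op D H. Im z = 0)"

definition is_eigenvalue :: "vec set \<Rightarrow> (vec \<Rightarrow> vec) \<Rightarrow> complex \<Rightarrow> bool" where
  "is_eigenvalue D H z \<longleftrightarrow> (\<exists>x\<in>D. x \<noteq> (\<lambda>n. 0) \<and> H x = vscale z x)"

definition root_vec :: "vec set \<Rightarrow> (vec \<Rightarrow> vec) \<Rightarrow> complex \<Rightarrow> vec \<Rightarrow> bool" where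
  "root_vec D H z x \<longleftrightarrow> (\<exists>k. (\<forall>j<k. ((\<lambda>v. vdiff (H v) (vscale z v)) ^^ j) x \<in> D) \<and>
      ((\<lambda>v. vdiff (H v) (vscale z v)) ^^ k) x = (\<lambda>n. 0))"

text \<open>Simple spectrum: for every eigenvalue the root space (algebraic multiplicity),
  and hence the eigenspace (geometric multiplicity), is one-dimensional.\<close>
definition simple_spectrum :: "vec set \<Rightarrow> (vec \<Rightarrow> vec) \<Rightarrow> bool" where
  "simple_spectrum D H \<longleftrightarrow> (\<forall>z. is_eigenvalue D H z \<longrightarrow>
     (\<exists>e\<in>D. e \<noteq> (\<lambda>n. 0) \<and> (\<forall>x. root_vec D H z x \<longrightarrow> (\<exists>c. x = vscale c e))))"

definition hilbert_schmidt :: "(vec \<Rightarrow> vec) \<Rightarrow> bool" where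
  "hilbert_schmidt T \<longleftrightarrow> bounded_op T \<and>
     (\<exists>e. orthonormal_basis e \<and> summable (\<lambda>n. (nrm (T (e n)))\<^sup>2))"

end

theory Submission
  imports Defs
begin

text \<open>Since \<open>\<Theta> \<psi>\<^sub>m = C\<^sub>m \<phi>\<^sub>m\<close>, the quadratic form of \<open>\<Theta>\<close> is
  \<open>\<langle>x, \<Theta> x\<rangle> = \<Sum> C\<^sub>n |\<langle>\<phi>\<^sub>n, x\<rangle>|\<^sup>2 \<ge> C\<^sub>- \<Sum> |\<langle>\<phi>\<^sub>n, x\<rangle>|\<^sup>2\<close>,
  so \<open>{\<phi>\<^sub>n}\<close> is a Bessel sequence. Combined with biorthogonality this makes
  \<open>{\<phi>\<^sub>n}\<close> quadratically close to \<open>{\<chi>\<^sub>n}\<close> as well. Now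
  \<open>(I - \<Theta>) \<chi>\<^sub>m = (\<chi>\<^sub>m - \<phi>\<^sub>m) + (1 - C\<^sub>m) \<phi>\<^sub>m + \<Theta> (\<psi>\<^sub>m - \<chi>\<^sub>m)\<close>
  with \<open>\<parallel>\<phi>\<^sub>m\<parallel> = 1\<close>, so \<open>\<parallel>(I - \<Theta>) \<chi>\<^sub>m\<parallel>\<close> and \<open>|C\<^sub>m - 1|\<close> differ by a
  square-summable sequence. As \<open>I - \<Theta>\<close> is symmetric, its Hilbert-Schmidt norm
  may be computed in the basis \<open>{\<chi>\<^sub>n}\<close>.\<close>

section \<open>Square-summable real sequences\<close>

lemma summable_power2_add:
  fixes x y :: "nat \<Rightarrow> real"
  assumes "summable (\<lambda>n. (x n)\<^sup>2)" and "summable (\<lambda>n. (y n)\<^sup>2)"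
  shows "summable (\<lambda>n. (x n + y n)\<^sup>2)"
proof (rule summable_comparison_test')
  show "summable (\<lambda>n. 2 * (x n)\<^sup>2 + 2 * (y n)\<^sup>2)"
    using assms by (intro summable_add summable_mult)
  show "norm ((x n + y n)\<^sup>2) \<le> 2 * (x n)\<^sup>2 + 2 * (y n)\<^sup>2" for n
    unfolding real_norm_def abs_power2
    using zero_le_power2[of "x n - y n"] by (simp add: power2_eq_square algebra_simps)
qed

lemma summable_power2_iff_of_dist_le:
  fixes x y r :: "nat \<Rightarrow> real"
  assumes r: "summable (\<lambda>n. (r n)\<^sup>2)" and dist: "\<And>n. \<bar>x n - y n\<bar> \<le> r n"
  shows "summable (\<lambda>n. (x n)\<^sup>2) \<longleftrightarrow> summable (\<lambda>n. (y n)\<^sup>2)"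
proof -
  have transfer: "summable (\<lambda>n. (u n)\<^sup>2)"
    if v: "summable (\<lambda>n. (v n)\<^sup>2)" and uv: "\<And>n. \<bar>u n - v n\<bar> \<le> r n" for u v :: "nat \<Rightarrow> real"
  proof (rule summable_comparison_test')
    show "summable (\<lambda>n. (\<bar>v n\<bar> + r n)\<^sup>2)"
      using v r by (intro summable_power2_add) simp_all
    show "norm ((u n)\<^sup>2) \<le> (\<bar>v n\<bar> + r n)\<^sup>2" for n
      using uv[of n] by (simp add: abs_le_square_iff[symmetric] del: power2_abs)
  qed
  show ?thesis
    using transfer[of y x] transfer[of x y] dist by (metis abs_minus_commute)
qed

lemma summable_row_sums_if_column_sums_bounded:
  fixes F :: "nat \<Rightarrow> nat \<Rightarrow> real"
  assumes rows: "\<And>m. (\<lambda>k. F m k) sums G m" and nonneg: "\<And>m k. 0 \<le> F m k"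
    and columns: "\<And>k N. (\<Sum>m<N. F m k) \<le> B k" and B: "summable B"
  shows "summable G"
proof (rule summableI_nonneg_bounded)
  show "0 \<le> G m" for m
    using rows[of m] nonneg by (metis sums_le sums_zero)
  show "(\<Sum>m<N. G m) \<le> (\<Sum>k. B k)" for N
  proof -
    have "(\<Sum>m<N. G m) = (\<Sum>k. \<Sum>m<N. F m k)"
      using rows by (simp add: sums_iff suminf_sum)
    also have "\<dots> \<le> (\<Sum>k. B k)"
      using rows columns B by (intro suminf_le) (auto simp: sums_iff intro!: summable_sum)
    finally show ?thesis .
  qed
qed

section \<open>The sequence space l2\<close>

lemma L2_set_le_nrm: "f \<in> l2 \<Longrightarrow> L2_set (\<lambda>n. cmod (f n)) {..<N} \<le> nrm f"
  unfolding L2_set_def nrm_def l2_def by (auto intro!: real_sqrt_le_mono sum_le_suminf)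

lemma nrm_le_if_L2_set_le:
  assumes "\<And>N. L2_set (\<lambda>n. cmod (f n)) {..<N} \<le> B"
  shows "f \<in> l2" and "nrm f \<le> B"
proof -
  have "0 \<le> B" using assms[of 0] by simp
  have partial: "(\<Sum>n<N. (cmod (f n))\<^sup>2) \<le> B\<^sup>2" for N
    using assms[of N] unfolding L2_set_def by (rule sqrt_le_D)
  show "f \<in> l2"
    unfolding l2_def mem_Collect_eq by (rule summableI_nonneg_bounded[OF _ partial]) simp
  then have "(\<Sum>n. (cmod (f n))\<^sup>2) \<le> B\<^sup>2"
    unfolding l2_def by (auto intro: suminf_le_const partial)
  then show "nrm f \<le> B"
    unfolding nrm_def using real_sqrt_le_mono \<open>0 \<le> B\<close> by fastforce
qed

lemma nrm_le_add_if_pointwise_le: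
  assumes f: "f \<in> l2" and g: "g \<in> l2" and le: "\<And>n. cmod (h n) \<le> cmod (f n) + cmod (g n)"
  shows "h \<in> l2" and "nrm h \<le> nrm f + nrm g"
proof -
  have partial: "L2_set (\<lambda>n. cmod (h n)) {..<N} \<le> nrm f + nrm g" for N
  proof -
    have "L2_set (\<lambda>n. cmod (h n)) {..<N} \<le> L2_set (\<lambda>n. cmod (f n) + cmod (g n)) {..<N}"
      by (rule L2_set_mono) (simp_all add: le)
    also have "\<dots> \<le> L2_set (\<lambda>n. cmod (f n)) {..<N} + L2_set (\<lambda>n. cmod (g n)) {..<N}"
      by (rule L2_set_triangle_ineq)
    also have "\<dots> \<le> nrm f + nrm g"
      using L2_set_le_nrm[OF f] L2_set_le_nrm[OF g] by (rule add_mono)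
    finally show ?thesis .
  qed
  show "h \<in> l2" by (rule nrm_le_if_L2_set_le(1)[OF partial])
  show "nrm h \<le> nrm f + nrm g" by (rule nrm_le_if_L2_set_le(2)[OF partial])
qed

lemma l2_zero [simp]: "(\<lambda>n. 0) \<in> l2"
  by (simp add: l2_def)

lemma l2_add: "f \<in> l2 \<Longrightarrow> g \<in> l2 \<Longrightarrow> (\<lambda>n. f n + g n) \<in> l2"
  by (rule nrm_le_add_if_pointwise_le(1)[of f g]) (auto intro: norm_triangle_ineq)

lemma l2_vdiff: "f \<in> l2 \<Longrightarrow> g \<in> l2 \<Longrightarrow> vdiff f g \<in> l2"
  unfolding vdiff_def
  by (rule nrm_le_add_if_pointwise_le(1)[of f g]) (auto intro: norm_triangle_ineq4)

lemma l2_scale: "f \<in> l2 \<Longrightarrow> (\<lambda>n. c * f n) \<in> l2"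
  by (simp add: l2_def norm_mult power_mult_distrib summable_mult)

lemma l2_sum:
  "finite A \<Longrightarrow> (\<And>k. k \<in> A \<Longrightarrow> g k \<in> l2) \<Longrightarrow> (\<lambda>n. \<Sum>k\<in>A. c k * g k n) \<in> l2"
proof (induction A rule: finite_induct)
  case (insert k A)
  then show ?case using l2_add[OF l2_scale] by simp
qed simp

lemma nrm_nonneg: "f \<in> l2 \<Longrightarrow> 0 \<le> nrm f"
  by (simp add: nrm_def l2_def suminf_nonneg)

lemma nrm_sq: "f \<in> l2 \<Longrightarrow> (nrm f)\<^sup>2 = (\<Sum>n. (cmod (f n))\<^sup>2)"
  by (simp add: nrm_def l2_def suminf_nonneg)

lemma nrm_scale: "f \<in> l2 \<Longrightarrow> nrm (\<lambda>n. c * f n) = cmod c * nrm f"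
  by (simp add: nrm_def l2_def norm_mult power_mult_distrib suminf_mult real_sqrt_mult)

lemma nrm_eq_0: assumes "f \<in> l2" "nrm f = 0" shows "f = (\<lambda>n. 0)"
proof -
  have "(\<Sum>n. (cmod (f n))\<^sup>2) = 0" using nrm_sq assms by fastforce
  then show ?thesis using assms(1) by (subst (asm) suminf_eq_zero_iff) (auto simp: l2_def)
qed

lemma abs_nrm_diff_le:
  assumes f: "f \<in> l2" and g: "g \<in> l2"
  shows "\<bar>nrm f - nrm g\<bar> \<le> nrm (vdiff f g)"
proof -
  have d: "vdiff f g \<in> l2" using f g by (rule l2_vdiff)
  have "nrm f \<le> nrm (vdiff f g) + nrm g"
    by (rule nrm_le_add_if_pointwise_le(2)[OF d g])
      (simp add: vdiff_def, metis add.commute norm_triangle_sub)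
  moreover have "nrm g \<le> nrm f + nrm (vdiff f g)"
    by (rule nrm_le_add_if_pointwise_le(2)[OF f d])
      (simp add: vdiff_def, metis norm_minus_commute norm_triangle_sub)
  ultimately show ?thesis by linarith
qed

lemma sum_cmod_mult_le_nrm:
  assumes "f \<in> l2" "g \<in> l2"
  shows "(\<Sum>n<N. cmod (f n) * cmod (g n)) \<le> nrm f * nrm g"
proof -
  have "(\<Sum>n<N. cmod (f n) * cmod (g n))
      \<le> L2_set (\<lambda>n. cmod (f n)) {..<N} * L2_set (\<lambda>n. cmod (g n)) {..<N}"
    using L2_set_mult_ineq[of "\<lambda>n. cmod (f n)" "\<lambda>n. cmod (g n)"] by simp
  also have "\<dots> \<le> nrm f * nrm g"
    using assms by (intro mult_mono L2_set_le_nrm) (simp_all add: nrm_nonneg)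
  finally show ?thesis .
qed

lemma ip_abs_summable: "f \<in> l2 \<Longrightarrow> g \<in> l2 \<Longrightarrow> summable (\<lambda>n. cmod (cnj (f n) * g n))"
  by (rule summableI_nonneg_bounded[where x = "nrm f * nrm g"])
    (simp_all add: norm_mult sum_cmod_mult_le_nrm)

lemma ip_summable: "f \<in> l2 \<Longrightarrow> g \<in> l2 \<Longrightarrow> summable (\<lambda>n. cnj (f n) * g n)"
  by (rule summable_norm_cancel) (rule ip_abs_summable)

lemma cmod_ip_le: assumes "f \<in> l2" "g \<in> l2" shows "cmod (ip f g) \<le> nrm f * nrm g"
proof -
  have "cmod (ip f g) \<le> (\<Sum>n. cmod (cnj (f n) * g n))"
    unfolding ip_def by (rule summable_norm) (rule ip_abs_summable[OF assms])
  also have "\<dots> \<le> nrm f * nrm g"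
    using assms by (intro suminf_le_const ip_abs_summable)
      (simp_all add: norm_mult sum_cmod_mult_le_nrm)
  finally show ?thesis .
qed

lemma ip_cnj: assumes "f \<in> l2" "g \<in> l2" shows "ip g f = cnj (ip f g)"
proof -
  have "(\<lambda>n. cnj (f n) * g n) sums ip f g"
    unfolding ip_def using ip_summable[OF assms] by (rule summable_sums)
  then have "(\<lambda>n. cnj (cnj (f n) * g n)) sums cnj (ip f g)"
    by (simp only: sums_cnj)
  then show ?thesis
    unfolding ip_def by (simp add: sums_iff mult.commute)
qed

lemma cnj_mult_self: "cnj z * z = complex_of_real ((cmod z)\<^sup>2)"
  by (metis complex_norm_square mult.commute)

lemma ip_self: "f \<in> l2 \<Longrightarrow> ip f f = complex_of_real ((nrm f)\<^sup>2)"
  by (simp add: ip_def nrm_sq l2_def suminf_of_real cnj_mult_self del: of_real_power)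

lemma ip_sum_right:
  assumes "f \<in> l2" "finite A" "\<And>k. k \<in> A \<Longrightarrow> g k \<in> l2"
  shows "ip f (\<lambda>i. \<Sum>k\<in>A. c k * g k i) = (\<Sum>k\<in>A. c k * ip f (g k))"
proof -
  have "ip f (\<lambda>i. \<Sum>k\<in>A. c k * g k i) = (\<Sum>n. \<Sum>k\<in>A. c k * (cnj (f n) * g k n))"
    unfolding ip_def by (simp add: sum_distrib_left algebra_simps)
  also have "\<dots> = (\<Sum>k\<in>A. \<Sum>n. c k * (cnj (f n) * g k n))"
    using assms by (intro suminf_sum summable_mult ip_summable) auto
  also have "\<dots> = (\<Sum>k\<in>A. c k * ip f (g k))"
    unfolding ip_def using assms by (intro sum.cong refl suminf_mult ip_summable) auto
  finally show ?thesis .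
qed

lemma ip_sum_left:
  assumes "f \<in> l2" "finite A" "\<And>k. k \<in> A \<Longrightarrow> g k \<in> l2"
  shows "ip (\<lambda>i. \<Sum>k\<in>A. c k * g k i) f = (\<Sum>k\<in>A. cnj (c k) * ip (g k) f)"
proof -
  have "ip (\<lambda>i. \<Sum>k\<in>A. c k * g k i) f = cnj (\<Sum>k\<in>A. c k * ip f (g k))"
    using assms by (simp add: ip_cnj[of f] l2_sum ip_sum_right)
  also have "\<dots> = (\<Sum>k\<in>A. cnj (c k) * ip (g k) f)"
    using assms by (simp add: ip_cnj[of f])
  finally show ?thesis .
qed

lemma ip_diff_right:
  "f \<in> l2 \<Longrightarrow> g \<in> l2 \<Longrightarrow> h \<in> l2 \<Longrightarrow> ip f (vdiff g h) = ip f g - ip f h"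
  unfolding ip_def vdiff_def by (simp add: right_diff_distrib suminf_diff ip_summable)

lemma ip_diff_left:
  "f \<in> l2 \<Longrightarrow> g \<in> l2 \<Longrightarrow> h \<in> l2 \<Longrightarrow> ip (vdiff g h) f = ip g f - ip h f"
  unfolding ip_def vdiff_def by (simp add: left_diff_distrib suminf_diff ip_summable)

lemma l2_tendsto_nrm:
  assumes "l2_tendsto s x" "\<And>k. s k \<in> l2" "x \<in> l2"
  shows "(\<lambda>k. nrm (s k)) \<longlonglongrightarrow> nrm x"
proof (rule Lim_null[THEN iffD2], rule Lim_null_comparison)
  show "\<forall>\<^sub>F k in sequentially. norm (nrm (s k) - nrm x) \<le> nrm (vdiff (s k) x)"
    using assms(2,3) by (simp add: abs_nrm_diff_le)
  show "(\<lambda>k. nrm (vdiff (s k) x)) \<longlonglongrightarrow> 0"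
    using assms(1) by (simp only: l2_tendsto_def)
qed

lemma l2_tendsto_ip:
  assumes "l2_tendsto s x" "\<And>k. s k \<in> l2" "x \<in> l2" "y \<in> l2"
  shows "(\<lambda>k. ip y (s k)) \<longlonglongrightarrow> ip y x"
proof (rule Lim_null[THEN iffD2], rule Lim_null_comparison)
  show "\<forall>\<^sub>F k in sequentially. norm (ip y (s k) - ip y x) \<le> nrm y * nrm (vdiff (s k) x)"
    using assms(2-4) by (simp add: ip_diff_right[symmetric] cmod_ip_le l2_vdiff)
  show "(\<lambda>k. nrm y * nrm (vdiff (s k) x)) \<longlonglongrightarrow> 0"
    using assms(1) unfolding l2_tendsto_def by (rule tendsto_mult_right_zero)
qed

lemma l2_tendsto_eventually_const:
  assumes "l2_tendsto s y" "\<forall>\<^sub>F N in sequentially. s N = v" "v \<in> l2" "y \<in> l2"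
  shows "v = y"
proof -
  have "(\<lambda>N. nrm (vdiff (s N) y)) \<longlonglongrightarrow> nrm (vdiff v y)"
    by (rule tendsto_eventually) (use assms(2) in \<open>auto elim: eventually_mono\<close>)
  then have "nrm (vdiff v y) = 0"
    using assms(1) LIMSEQ_unique unfolding l2_tendsto_def by blast
  then have "vdiff v y = (\<lambda>n. 0)"
    by (rule nrm_eq_0[rotated]) (rule l2_vdiff[OF assms(3,4)])
  then show ?thesis by (simp add: vdiff_def fun_eq_iff)
qed

lemma parseval_sums:
  assumes onb: "orthonormal_basis e" and y: "y \<in> l2"
  shows "(\<lambda>k. (cmod (ip (e k) y))\<^sup>2) sums (nrm y)\<^sup>2"
proof -
  have e: "\<And>k. e k \<in> l2" and orth: "\<And>j k. ip (e j) (e k) = (if j = k then 1 else 0)"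
    using onb by (auto simp: orthonormal_basis_def is_basis_def)
  obtain c where c: "l2_tendsto (\<lambda>N i. \<Sum>k<N. c k * e k i) y"
    using onb y unfolding orthonormal_basis_def is_basis_def by blast
  define S where "S = (\<lambda>N i. \<Sum>k<N. c k * e k i)"
  have S: "S N \<in> l2" for N
    unfolding S_def by (rule l2_sum) (simp_all add: e)
  have ip_S: "ip (e j) (S N) = (if j < N then c j else 0)" for j N
    unfolding S_def by (simp add: ip_sum_right e orth if_distrib cong: if_cong)
  have coeff: "c j = ip (e j) y" for j
  proof (rule LIMSEQ_unique)
    show "(\<lambda>N. ip (e j) (S N)) \<longlonglongrightarrow> ip (e j) y"
      using c[folded S_def] S y e by (rule l2_tendsto_ip)
    show "(\<lambda>N. ip (e j) (S N)) \<longlonglongrightarrow> c j"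
      by (rule tendsto_eventually, rule eventually_sequentiallyI[of "Suc j"]) (simp add: ip_S)
  qed
  have norm_S: "(nrm (S N))\<^sup>2 = (\<Sum>k<N. (cmod (c k))\<^sup>2)" for N
  proof -
    have "complex_of_real ((nrm (S N))\<^sup>2) = ip (S N) (S N)"
      by (simp add: ip_self S)
    also have "\<dots> = (\<Sum>k<N. cnj (c k) * c k)"
      by (subst (1) S_def) (simp add: ip_sum_left S e ip_S)
    also have "\<dots> = complex_of_real (\<Sum>k<N. (cmod (c k))\<^sup>2)"
      by (simp add: cnj_mult_self del: of_real_power)
    finally show ?thesis by (simp only: of_real_eq_iff)
  qed
  have "(\<lambda>N. (nrm (S N))\<^sup>2) \<longlonglongrightarrow> (nrm y)\<^sup>2"
    using c[folded S_def] S y by (intro tendsto_power l2_tendsto_nrm)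
  then show ?thesis
    unfolding sums_def norm_S coeff .
qed

section \<open>Bounded and Hilbert-Schmidt operators\<close>

lemma bounded_op_l2: "bounded_op T \<Longrightarrow> x \<in> l2 \<Longrightarrow> T x \<in> l2"
  by (simp add: bounded_op_def lin_op_def)

lemma bounded_op_vdiff:
  assumes "bounded_op T" "x \<in> l2" "y \<in> l2"
  shows "T (vdiff x y) = vdiff (T x) (T y)"
proof -
  have "T (\<lambda>n. 1 * x n + (-1) * y n) = (\<lambda>n. 1 * T x n + (-1) * T y n)"
    using assms unfolding bounded_op_def lin_op_def by blast
  then show ?thesis by (simp add: vdiff_def)
qed

lemma bounded_op_id_minus:
  assumes T: "bounded_op T"
  shows "bounded_op (\<lambda>x. vdiff x (T x))"
proof -
  have comb: "(\<lambda>n. a * x n + b * y n) \<in> l2" if "x \<in> l2" "y \<in> l2" for x y a b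
    using that by (intro l2_add l2_scale)
  have lin: "vdiff (\<lambda>n. a * x n + b * y n) (T (\<lambda>n. a * x n + b * y n))
      = (\<lambda>n. a * vdiff x (T x) n + b * vdiff y (T y) n)"
    if "x \<in> l2" "y \<in> l2" for x y a b
  proof -
    have "T (\<lambda>n. a * x n + b * y n) = (\<lambda>n. a * T x n + b * T y n)"
      using T that unfolding bounded_op_def lin_op_def by blast
    then show ?thesis by (simp add: vdiff_def algebra_simps)
  qed
  have "lin_op l2 (\<lambda>x. vdiff x (T x))"
    unfolding lin_op_def by (simp add: comb lin l2_vdiff bounded_op_l2[OF T])
  moreover obtain M where M: "\<And>x. x \<in> l2 \<Longrightarrow> nrm (T x) \<le> M * nrm x"
    using T by (auto simp: bounded_op_def)
  have "nrm (vdiff x (T x)) \<le> (1 + M) * nrm x" if x: "x \<in> l2" for x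
  proof -
    have "nrm (vdiff x (T x)) \<le> nrm x + nrm (T x)"
      by (rule nrm_le_add_if_pointwise_le(2)[OF x bounded_op_l2[OF T x]])
        (simp add: vdiff_def norm_triangle_ineq4)
    then show ?thesis using M[OF x] by (simp add: distrib_right)
  qed
  ultimately show ?thesis
    unfolding bounded_op_def by blast
qed

lemma hilbert_schmidt_iff_summable_onb:
  assumes T: "bounded_op T" and sym: "\<And>x y. x \<in> l2 \<Longrightarrow> y \<in> l2 \<Longrightarrow> ip x (T y) = ip (T x) y"
    and f: "orthonormal_basis f"
  shows "hilbert_schmidt T \<longleftrightarrow> summable (\<lambda>m. (nrm (T (f m)))\<^sup>2)"
proof
  assume "hilbert_schmidt T"
  then obtain e where e: "orthonormal_basis e" and summable_e: "summable (\<lambda>n. (nrm (T (e n)))\<^sup>2)"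
    unfolding hilbert_schmidt_def by blast
  have e_l2: "\<And>n. e n \<in> l2" and f_l2: "\<And>m. f m \<in> l2"
    using e f by (simp_all add: orthonormal_basis_def is_basis_def)
  show "summable (\<lambda>m. (nrm (T (f m)))\<^sup>2)"
  proof (rule summable_row_sums_if_column_sums_bounded)
    show "(\<lambda>n. (cmod (ip (f m) (T (e n))))\<^sup>2) sums (nrm (T (f m)))\<^sup>2" for m
    proof -
      have "ip (e n) (T (f m)) = cnj (ip (f m) (T (e n)))" for n
        unfolding sym[OF e_l2 f_l2] by (rule ip_cnj[OF f_l2 bounded_op_l2[OF T e_l2]])
      then show ?thesis
        using parseval_sums[OF e bounded_op_l2[OF T f_l2[of m]]] by simp
    qed
    show "(\<Sum>m<N. (cmod (ip (f m) (T (e n))))\<^sup>2) \<le> (nrm (T (e n)))\<^sup>2" for n N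
    proof -
      have P: "(\<lambda>m. (cmod (ip (f m) (T (e n))))\<^sup>2) sums (nrm (T (e n)))\<^sup>2"
        by (rule parseval_sums[OF f bounded_op_l2[OF T e_l2]])
      show ?thesis
        using sum_le_suminf[OF sums_summable[OF P], of "{..<N}"] sums_unique[OF P] by simp
    qed
  qed (simp_all add: summable_e)
next
  assume "summable (\<lambda>m. (nrm (T (f m)))\<^sup>2)"
  then show "hilbert_schmidt T"
    unfolding hilbert_schmidt_def using T f by blast
qed

section \<open>Operators given by a series over a biorthogonal family\<close>

lemma l2_tendsto_series_biorthogonal:
  assumes series: "l2_tendsto (\<lambda>N i. \<Sum>n<N. complex_of_real (C n) * ip (\<phi> n) x * \<phi> n i) y"
    and x: "x \<in> l2" and y: "y \<in> l2" and \<phi>: "\<And>n. \<phi> n \<in> l2"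
    and biorth: "\<And>n. ip x (\<phi> n) = (if n = m then 1 else 0)"
  shows "y = (\<lambda>i. complex_of_real (C m) * \<phi> m i)"
proof -
  have coeff: "ip (\<phi> n) x = (if n = m then 1 else 0)" for n
    using ip_cnj[OF x \<phi>] biorth by simp
  have "(\<Sum>n<N. complex_of_real (C n) * ip (\<phi> n) x * \<phi> n i) = complex_of_real (C m) * \<phi> m i"
    if "m < N" for N i
  proof -
    have "(\<Sum>n<N. complex_of_real (C n) * ip (\<phi> n) x * \<phi> n i)
        = (\<Sum>n<N. if n = m then complex_of_real (C m) * \<phi> m i else 0)"
      by (rule sum.cong) (simp_all add: coeff)
    then show ?thesis using that by simp
  qed
  then have "\<forall>\<^sub>F N in sequentially.
      (\<lambda>i. \<Sum>n<N. complex_of_real (C n) * ip (\<phi> n) x * \<phi> n i) = (\<lambda>i. complex_of_real (C m) * \<phi> m i)"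
    by (intro eventually_sequentiallyI[of "Suc m"]) auto
  from l2_tendsto_eventually_const[OF series this l2_scale[OF \<phi>] y] show ?thesis ..
qed

lemma sum_cmod_ip_sq_le_of_positive_series:
  assumes series: "l2_tendsto (\<lambda>N i. \<Sum>n<N. complex_of_real (C n) * ip (\<phi> n) x * \<phi> n i) y"
    and x: "x \<in> l2" and y: "y \<in> l2" and \<phi>: "\<And>n. \<phi> n \<in> l2"
    and bound: "nrm y \<le> M * nrm x" and Cm: "0 < Cm" "\<And>n. Cm \<le> C n"
  shows "(\<Sum>n<N. (cmod (ip (\<phi> n) x))\<^sup>2) \<le> M / Cm * (nrm x)\<^sup>2"
proof -
  define s where "s N = (\<Sum>n<N. C n * (cmod (ip (\<phi> n) x))\<^sup>2)" for N
  have ip_partial: "ip x (\<lambda>i. \<Sum>n<N. complex_of_real (C n) * ip (\<phi> n) x * \<phi> n i)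
      = complex_of_real (s N)" for N
  proof -
    have "ip x (\<lambda>i. \<Sum>n<N. complex_of_real (C n) * ip (\<phi> n) x * \<phi> n i)
        = (\<Sum>n<N. complex_of_real (C n) * ip (\<phi> n) x * ip x (\<phi> n))"
      by (rule ip_sum_right) (simp_all add: x \<phi>)
    also have "\<dots> = (\<Sum>n<N. complex_of_real (C n) * complex_of_real ((cmod (ip (\<phi> n) x))\<^sup>2))"
      using x \<phi> by (simp add: ip_cnj[of x] complex_norm_square mult_ac del: of_real_power)
    also have "\<dots> = complex_of_real (s N)"
      by (simp add: s_def del: of_real_power)
    finally show ?thesis .
  qed
  have "(\<lambda>N. Re (ip x (\<lambda>i. \<Sum>n<N. complex_of_real (C n) * ip (\<phi> n) x * \<phi> n i))) \<longlonglongrightarrow> Re (ip x y)"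
    using x y \<phi> by (intro tendsto_Re l2_tendsto_ip[OF series]) (simp_all add: l2_sum)
  then have "s \<longlonglongrightarrow> Re (ip x y)"
    by (simp add: ip_partial)
  moreover have "incseq s"
    unfolding s_def using Cm by (intro incseq_SucI) (simp add: order_trans[OF less_imp_le])
  ultimately have "s N \<le> Re (ip x y)"
    by (rule incseq_le[rotated])
  also have "\<dots> \<le> nrm x * nrm y"
    using complex_Re_le_cmod cmod_ip_le[OF x y] by (rule order_trans)
  also have "\<dots> \<le> M * (nrm x)\<^sup>2"
    using mult_left_mono[OF bound nrm_nonneg[OF x]] by (simp add: power2_eq_square mult_ac)
  finally have "s N \<le> M * (nrm x)\<^sup>2" .
  moreover have "Cm * (\<Sum>n<N. (cmod (ip (\<phi> n) x))\<^sup>2) \<le> s N"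
    unfolding s_def sum_distrib_left using Cm(2) by (intro sum_mono mult_right_mono) simp_all
  ultimately show ?thesis
    using Cm(1) by (simp add: field_simps)
qed

lemma biorthogonal_quadratically_close:
  assumes chi: "orthonormal_basis chi" and \<psi>: "\<And>k. \<psi> k \<in> l2" and \<phi>: "\<And>m. \<phi> m \<in> l2"
    and close: "summable (\<lambda>k. (nrm (vdiff (\<psi> k) (chi k)))\<^sup>2)"
    and biorth: "\<And>k m. ip (\<psi> k) (\<phi> m) = (if m = k then 1 else 0)"
    and bessel: "\<And>x N. x \<in> l2 \<Longrightarrow> (\<Sum>m<N. (cmod (ip (\<phi> m) x))\<^sup>2) \<le> K * (nrm x)\<^sup>2"
  shows "summable (\<lambda>m. (nrm (vdiff (\<phi> m) (chi m)))\<^sup>2)"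
proof -
  have chi_l2: "\<And>k. chi k \<in> l2" and orth: "\<And>j k. ip (chi j) (chi k) = (if j = k then 1 else 0)"
    using chi by (auto simp: orthonormal_basis_def is_basis_def)
  define d where "d k = vdiff (\<psi> k) (chi k)" for k
  have d: "d k \<in> l2" for k
    unfolding d_def using \<psi> chi_l2 by (rule l2_vdiff)
  show ?thesis
  proof (rule summable_row_sums_if_column_sums_bounded)
    show "(\<lambda>k. (cmod (ip (\<phi> m) (d k)))\<^sup>2) sums (nrm (vdiff (\<phi> m) (chi m)))\<^sup>2" for m
    proof -
      \<comment> \<open>by biorthogonality the \<open>\<chi>\<close>-coefficients of \<open>\<phi>\<^sub>m - \<chi>\<^sub>m\<close> are
        \<open>-\<langle>\<psi>\<^sub>k - \<chi>\<^sub>k, \<phi>\<^sub>m\<rangle>\<close>, whose column sums the Bessel bound controls\<close>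
      have "ip (chi k) (vdiff (\<phi> m) (chi m)) = ip (chi k) (\<phi> m) - ip (\<psi> k) (\<phi> m)" for k
        using chi_l2 \<phi> by (simp add: ip_diff_right orth biorth)
      also have "\<dots> k = - cnj (ip (\<phi> m) (d k))" for k
        unfolding d_def using \<psi> chi_l2 \<phi> l2_vdiff
        by (simp add: ip_diff_left ip_cnj[of "\<phi> m", symmetric])
      finally show ?thesis
        using parseval_sums[OF chi l2_vdiff[OF \<phi> chi_l2], of m m] by simp
    qed
    show "(\<Sum>m<N. (cmod (ip (\<phi> m) (d k)))\<^sup>2) \<le> K * (nrm (d k))\<^sup>2" for k N
      by (rule bessel[OF d])
    show "summable (\<lambda>k. K * (nrm (d k))\<^sup>2)"
      using close unfolding d_def by (rule summable_mult)
  qed simp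
qed

lemma nrm_id_minus_near_eigenvector:
  assumes T: "bounded_op T" and M: "\<And>x. x \<in> l2 \<Longrightarrow> nrm (T x) \<le> M * nrm x"
    and eig: "T \<psi> = (\<lambda>i. complex_of_real c * \<phi> i)" and unit: "nrm \<phi> = 1"
    and \<psi>: "\<psi> \<in> l2" and \<phi>: "\<phi> \<in> l2" and e: "e \<in> l2"
  shows "\<bar>nrm (vdiff e (T e)) - \<bar>c - 1\<bar>\<bar> \<le> nrm (vdiff \<phi> e) + M * nrm (vdiff \<psi> e)"
proof -
  define d where "d = vdiff \<psi> e"
  define w where "w = (\<lambda>i. complex_of_real (1 - c) * \<phi> i)"
  have d: "d \<in> l2" and w: "w \<in> l2" and Te: "T e \<in> l2"
    using \<psi> \<phi> e by (simp_all add: d_def w_def l2_vdiff l2_scale bounded_op_l2[OF T])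
  have "T d = vdiff (T \<psi>) (T e)"
    unfolding d_def by (rule bounded_op_vdiff[OF T \<psi> e])
  then have "vdiff (vdiff e (T e)) w = (\<lambda>i. (e i - \<phi> i) + T d i)"
    by (simp add: vdiff_def w_def eig fun_eq_iff algebra_simps)
  have "nrm w = \<bar>c - 1\<bar>"
    unfolding w_def by (simp only: nrm_scale[OF \<phi>] norm_of_real unit mult_1_right abs_minus_commute)
  then have "\<bar>nrm (vdiff e (T e)) - \<bar>c - 1\<bar>\<bar> = \<bar>nrm (vdiff e (T e)) - nrm w\<bar>"
    by simp
  also have "\<dots> \<le> nrm (vdiff (vdiff e (T e)) w)"
    using e Te w by (intro abs_nrm_diff_le l2_vdiff)
  also have "\<dots> \<le> nrm (vdiff \<phi> e) + nrm (T d)"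
    unfolding \<open>vdiff (vdiff e (T e)) w = _\<close>
    using \<phi> e d by (intro nrm_le_add_if_pointwise_le(2) l2_vdiff bounded_op_l2[OF T])
      (simp_all add: vdiff_def, metis norm_minus_commute norm_triangle_ineq)
  also have "\<dots> \<le> nrm (vdiff \<phi> e) + M * nrm d"
    using M[OF d] by simp
  finally show ?thesis
    unfolding d_def .
qed

theorem lemma4p1:
  fixes D :: "vec set" and H :: "vec \<Rightarrow> vec"
    and \<psi> chi \<phi> :: "nat \<Rightarrow> vec" and ev evs :: "nat \<Rightarrow> complex"
    and \<Theta> :: "vec \<Rightarrow> vec" and C :: "nat \<Rightarrow> real" and Cm Cp :: real
  assumes qsa: "quasi_self_adjoint D H"
    and real_spec: "real_spectrum D H"
    and simple: "simple_spectrum D H"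
    and discrete: "discrete_spectrum D H"
    and psi_eig: "\<And>n. \<psi> n \<in> D \<and> \<psi> n \<noteq> (\<lambda>i. 0) \<and> H (\<psi> n) = vscale (ev n) (\<psi> n)"
    and psi_basis: "is_basis \<psi>"
    and chi_onb: "orthonormal_basis chi"
    and quad_close: "summable (\<lambda>n. (nrm (vdiff (\<psi> n) (chi n)))\<^sup>2)"
    and phi_eig: "\<And>n. \<phi> n \<in> adj_dom D H \<and> \<phi> n \<noteq> (\<lambda>i. 0) \<and>
                      adj D H (\<phi> n) = vscale (evs n) (\<phi> n)"
    and biorth: "\<And>m n. ip (\<psi> m) (\<phi> n) = (if n = m then 1 else 0)"
    and phi_norm: "\<And>n. nrm (\<phi> n) = 1"
    and metric: "is_metric D H \<Theta>"
    and Theta_series: "\<And>x. x \<in> l2 \<Longrightarrow>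
          l2_tendsto (\<lambda>N i. \<Sum>n<N. complex_of_real (C n) * ip (\<phi> n) x * \<phi> n i) (\<Theta> x)"
    and Cm_pos: "0 < Cm" and Cm_le: "Cm \<le> Cp"
    and C_bounds: "\<And>n. Cm \<le> C n \<and> C n \<le> Cp"
  shows "hilbert_schmidt (\<lambda>x. vdiff x (\<Theta> x)) \<longleftrightarrow>
         (\<exists>\<alpha> :: nat \<Rightarrow> real. summable (\<lambda>n. (\<alpha> n)\<^sup>2) \<and> (\<forall>n. C n = 1 + \<alpha> n))"
proof -
  have \<Theta>: "bounded_op \<Theta>"
    and \<Theta>_sym: "\<And>x y. x \<in> l2 \<Longrightarrow> y \<in> l2 \<Longrightarrow> ip x (\<Theta> y) = ip (\<Theta> x) y"
    using metric by (simp_all add: is_metric_def)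
  obtain M where M: "\<And>x. x \<in> l2 \<Longrightarrow> nrm (\<Theta> x) \<le> M * nrm x"
    using \<Theta> by (auto simp: bounded_op_def)
  have \<psi>: "\<And>n. \<psi> n \<in> l2" and chi: "\<And>n. chi n \<in> l2" and \<phi>: "\<And>n. \<phi> n \<in> l2"
    using psi_basis chi_onb phi_eig by (auto simp: is_basis_def orthonormal_basis_def adj_dom_def)
  have \<Theta>\<psi>: "\<Theta> (\<psi> m) = (\<lambda>i. complex_of_real (C m) * \<phi> m i)" for m
    using Theta_series \<psi> bounded_op_l2[OF \<Theta>] \<phi> biorth
    by (blast intro: l2_tendsto_series_biorthogonal)
  have bessel: "(\<Sum>n<N. (cmod (ip (\<phi> n) x))\<^sup>2) \<le> M / Cm * (nrm x)\<^sup>2" if x: "x \<in> l2" for x N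
    using Theta_series[OF x] x bounded_op_l2[OF \<Theta> x] \<phi> M[OF x] Cm_pos C_bounds
    by (blast intro: sum_cmod_ip_sq_le_of_positive_series)
  have \<phi>_close: "summable (\<lambda>m. (nrm (vdiff (\<phi> m) (chi m)))\<^sup>2)"
    using chi_onb \<psi> \<phi> quad_close biorth bessel by (rule biorthogonal_quadratically_close)
  define r where "r m = nrm (vdiff (\<phi> m) (chi m)) + M * nrm (vdiff (\<psi> m) (chi m))" for m
  have "summable (\<lambda>m. (r m)\<^sup>2)"
    unfolding r_def using \<phi>_close summable_mult[OF quad_close, of "M\<^sup>2"]
    by (intro summable_power2_add) (simp_all add: power_mult_distrib)
  moreover have "\<bar>nrm (vdiff (chi m) (\<Theta> (chi m))) - \<bar>C m - 1\<bar>\<bar> \<le> r m" for m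
    unfolding r_def using \<Theta> M \<Theta>\<psi> phi_norm \<psi> \<phi> chi by (rule nrm_id_minus_near_eigenvector)
  ultimately have "summable (\<lambda>m. (nrm (vdiff (chi m) (\<Theta> (chi m))))\<^sup>2)
      \<longleftrightarrow> summable (\<lambda>m. \<bar>C m - 1\<bar>\<^sup>2)"
    by (rule summable_power2_iff_of_dist_le)
  moreover have "hilbert_schmidt (\<lambda>x. vdiff x (\<Theta> x))
      \<longleftrightarrow> summable (\<lambda>m. (nrm (vdiff (chi m) (\<Theta> (chi m))))\<^sup>2)"
    using \<Theta>_sym bounded_op_l2[OF \<Theta>]
    by (intro hilbert_schmidt_iff_summable_onb bounded_op_id_minus \<Theta> chi_onb)
      (simp add: ip_diff_left ip_diff_right)
  moreover have "(\<exists>\<alpha>. summable (\<lambda>n. (\<alpha> n)\<^sup>2) \<and> (\<forall>n. C n = 1 + \<alpha> n))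
      \<longleftrightarrow> summable (\<lambda>m. \<bar>C m - 1\<bar>\<^sup>2)"
    by (auto intro!: exI[of _ "\<lambda>n. C n - 1"])
  ultimately show ?thesis by simp
qed

end
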